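(* Let $S$ be a finite semigroup. The following are equivalent: (i) $\mathbb{N}\times S$ has only countably many subdirect products; (ii) $\mathbb{N}\times S$ has only countably many pairwise non-isomorphic subdirect products; (iii) for every $s\in S$ there exists $t\in S$ such that $ts=s$ or $st=s$.
   Context: $\mathbb{N}=\{1,2,3,\dots\}$ is the free monogenic semigroup (positive integers under addition); $\mathbb{N}\times S$ is the direct product with componentwise operation. A subdirect product of $\mathbb{N}\times S$ is a subsemigroup $U\leq \mathbb{N}\times S$ whose projection onto the first coordinate is all of $\mathbb{N}$ and whose projection onto the second coordinate is all of $S$. *)

theory Defs
  imports Main "HOL-Library.Countable_Set"
begin

text \<open>The free monogenic semigroup N = {1,2,3,...} under addition is rendered as the set {1..} of
  natural numbers with +.\<close>

definition semigroup_on :: "'a set \<Rightarrow> ('a \<Rightarrow> 'a \<Rightarrow> 'a) \<Rightarrow> bool" where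
  "semigroup_on S f \<longleftrightarrow> (\<forall>x\<in>S. \<forall>y\<in>S. f x y \<in> S) \<and>
     (\<forall>x\<in>S. \<forall>y\<in>S. \<forall>z\<in>S. f (f x y) z = f x (f y z))"

definition prod_mult :: "('a \<Rightarrow> 'a \<Rightarrow> 'a) \<Rightarrow> nat \<times> 'a \<Rightarrow> nat \<times> 'a \<Rightarrow> nat \<times> 'a" where
  "prod_mult f x y = (fst x + fst y, f (snd x) (snd y))"

definition subdirect_product :: "'a set \<Rightarrow> ('a \<Rightarrow> 'a \<Rightarrow> 'a) \<Rightarrow> (nat \<times> 'a) set \<Rightarrow> bool" where
  "subdirect_product S f U \<longleftrightarrow> U \<subseteq> {1..} \<times> S \<and>
     (\<forall>x\<in>U. \<forall>y\<in>U. prod_mult f x y \<in> U) \<and>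
     fst ` U = {1..} \<and> snd ` U = S"

definition sg_iso :: "('a \<Rightarrow> 'a \<Rightarrow> 'a) \<Rightarrow> (nat \<times> 'a) set \<Rightarrow> (nat \<times> 'a) set \<Rightarrow> bool" where
  "sg_iso f U V \<longleftrightarrow> (\<exists>h. bij_betw h U V \<and>
     (\<forall>x\<in>U. \<forall>y\<in>U. h (prod_mult f x y) = prod_mult f (h x) (h y)))"

end

theory Submission
  imports Defs "HOL-Analysis.Finite_Cartesian_Product"
begin

(* If every s in S has a one-sided local identity t (t s = s or s t = s), then in a subdirect
   product U of N x S the fibre {n. (n, s) in U} is closed under adding the first coordinate of
   any element of U lying over t. A set of naturals closed under a positive translation is
   determined by the period and a finite set, and U is determined by its finitely many fibres,
   so there are only countably many U.

   Conversely, let s have no such t. Then s is not of the form a s c either (replace c by an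
   idempotent power), so the u with s not in S^1 u S^1 form an ideal Q containing s S and S s but
   not s, and Q contains an idempotent e. For every set B of naturals,
   (N x Q) u (2N x S) u ({2b + 1 | b in B} x {s}) is a subdirect product. Along the column
   N x {e} an isomorphism between two of these is additive in the first coordinate, which forces
   it to preserve first coordinates; the fibre over 2b + 1 has |Q| + 1 elements if b is in B and
   |Q| otherwise, so the isomorphism class determines B. *)

section \<open>Countably many subdirect products\<close>

definition shift_closed_sets :: "nat set set" where
  "shift_closed_sets = {A. \<exists>m>0. \<forall>n\<in>A. n + m \<in> A}"

definition shift_closure :: "nat \<Rightarrow> nat set \<Rightarrow> nat set" where
  "shift_closure m F = {n. \<exists>a\<in>F. a \<le> n \<and> a mod m = n mod m}"

text \<open>A set closed under adding \<open>m\<close> is generated by the least element of each residue class mod \<open>m\<close> it meets.\<close>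

lemma shift_closed_eq_shift_closure:
  assumes m: "0 < m" and closed: "\<forall>n\<in>A. n + m \<in> A"
  obtains F where "finite F" "A = shift_closure m F"
proof -
  have closed_mult: "a + k * m \<in> A" if "a \<in> A" for a k
  proof (induction k)
    case (Suc k)
    then have "(a + k * m) + m \<in> A"
      using closed by blast
    then show ?case
      by (simp add: ac_simps)
  qed (use that in simp)
  define L where "L r = (LEAST a. a \<in> A \<and> a mod m = r)" for r
  define F where "F = L ` {r. r < m \<and> (\<exists>a\<in>A. a mod m = r)}"
  have L: "L r \<in> A \<and> L r mod m = r" if "\<exists>a\<in>A. a mod m = r" for r
    using that LeastI_ex[of "\<lambda>a. a \<in> A \<and> a mod m = r"] unfolding L_def by blast
  have "A = shift_closure m F"
  proof
    show "A \<subseteq> shift_closure m F"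
    proof
      fix n assume n: "n \<in> A"
      have "L (n mod m) \<in> F"
        unfolding F_def using n m by auto
      moreover have "L (n mod m) \<le> n"
        unfolding L_def by (rule Least_le) (use n in blast)
      moreover have "L (n mod m) mod m = n mod m"
        using L n by blast
      ultimately show "n \<in> shift_closure m F"
        unfolding shift_closure_def by blast
    qed
  next
    show "shift_closure m F \<subseteq> A"
    proof
      fix n assume "n \<in> shift_closure m F"
      then obtain a where a: "a \<in> F" "a \<le> n" "a mod m = n mod m"
        unfolding shift_closure_def by blast
      have "a \<in> A"
        using a(1) L unfolding F_def by blast
      obtain k where "n - a = m * k"
        using a(2,3) by (metis mod_eq_dvd_iff_nat dvdE)
      then have "n = a + k * m"
        using a(2) by (simp add: algebra_simps)
      then show "n \<in> A"
        using closed_mult[OF \<open>a \<in> A\<close>] by simp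
    qed
  qed
  moreover have "finite F"
    unfolding F_def by simp
  ultimately show thesis
    using that by blast
qed

lemma countable_shift_closed_sets: "countable shift_closed_sets"
proof (rule countable_subset)
  show "shift_closed_sets \<subseteq> case_prod shift_closure ` (UNIV \<times> Collect finite)"
  proof
    fix A assume "A \<in> shift_closed_sets"
    then obtain m where "0 < m" "\<forall>n\<in>A. n + m \<in> A"
      unfolding shift_closed_sets_def by blast
    then obtain F where "finite F" "A = shift_closure m F"
      by (rule shift_closed_eq_shift_closure)
    then show "A \<in> case_prod shift_closure ` (UNIV \<times> Collect finite)"
      by force
  qed
  show "countable (case_prod shift_closure ` (UNIV \<times> Collect (finite :: nat set \<Rightarrow> bool)))"
    by (intro countable_image countable_SIGMA) (simp_all add: countable_Collect_finite)
qed

definition fibre :: "(nat \<times> 'a) set \<Rightarrow> 'a \<Rightarrow> nat set" where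
  "fibre U s = {n. (n, s) \<in> U}"

lemma fibre_shift_closed:
  assumes U: "subdirect_product S f U" and t: "t \<in> S" and unit: "f t s = s \<or> f s t = s"
  shows "fibre U s \<in> shift_closed_sets"
proof -
  obtain m where mt: "(m, t) \<in> U"
    using U t unfolding subdirect_product_def by force
  have m: "0 < m"
    using U mt unfolding subdirect_product_def by auto
  have "n + m \<in> fibre U s" if "n \<in> fibre U s" for n
  proof -
    have ns: "(n, s) \<in> U"
      using that unfolding fibre_def by simp
    have "prod_mult f (m, t) (n, s) \<in> U" "prod_mult f (n, s) (m, t) \<in> U"
      using U mt ns unfolding subdirect_product_def by blast+
    then show ?thesis
      using unit unfolding fibre_def prod_mult_def by (auto simp: add.commute)
  qed
  then show ?thesis
    unfolding shift_closed_sets_def using m by blast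
qed

lemma countable_subdirect_products:
  assumes fin: "finite S" and units: "\<forall>s\<in>S. \<exists>t\<in>S. f t s = s \<or> f s t = s"
  shows "countable {U. subdirect_product S f U}"
proof (rule countable_image_inj_on)
  let ?fibres = "\<lambda>U. restrict (fibre U) S"
  show "countable (?fibres ` {U. subdirect_product S f U})"
  proof (rule countable_subset)
    show "?fibres ` {U. subdirect_product S f U} \<subseteq> Pi\<^sub>E S (\<lambda>_. shift_closed_sets)"
      using units fibre_shift_closed by fastforce
    show "countable (Pi\<^sub>E S (\<lambda>_. shift_closed_sets))"
      using fin countable_shift_closed_sets by (rule countable_PiE)
  qed
  show "inj_on ?fibres {U. subdirect_product S f U}"
  proof (rule inj_onI)
    fix U V assume "U \<in> {U. subdirect_product S f U}" "V \<in> {U. subdirect_product S f U}"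
      and eq: "?fibres U = ?fibres V"
    then have "U \<subseteq> UNIV \<times> S" "V \<subseteq> UNIV \<times> S"
      unfolding subdirect_product_def by auto
    moreover have "(n, s) \<in> U \<longleftrightarrow> (n, s) \<in> V" if "s \<in> S" for n s
      using fun_cong[OF eq, of s] that unfolding fibre_def by auto
    ultimately show "U = V"
      by auto
  qed
qed

lemma countable_quotient: "countable X \<Longrightarrow> countable (X // R)"
  unfolding quotient_def by (rule countable_subset[of _ "(\<lambda>x. R `` {x}) ` X"]) auto

section \<open>Powers and two-sided divisors in a finite semigroup\<close>

text \<open>\<open>spow f x k\<close> is \<open>x\<^bsup>k+1\<^esup>\<close>: a semigroup need not have an identity, so there is no zeroth power.\<close>

fun spow :: "('a \<Rightarrow> 'a \<Rightarrow> 'a) \<Rightarrow> 'a \<Rightarrow> nat \<Rightarrow> 'a" where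
  "spow f x 0 = x"
| "spow f x (Suc k) = f x (spow f x k)"

text \<open>\<open>two_sided_divisor S f u s\<close> says \<open>s \<in> S\<^sup>1 u S\<^sup>1\<close>, where \<open>S\<^sup>1\<close> is \<open>S\<close> with an identity adjoined.\<close>

definition two_sided_divisor :: "'a set \<Rightarrow> ('a \<Rightarrow> 'a \<Rightarrow> 'a) \<Rightarrow> 'a \<Rightarrow> 'a \<Rightarrow> bool" where
  "two_sided_divisor S f u s \<longleftrightarrow>
     s = u \<or> (\<exists>a\<in>S. s = f a u) \<or> (\<exists>b\<in>S. s = f u b) \<or> (\<exists>a\<in>S. \<exists>b\<in>S. s = f (f a u) b)"

context
  fixes S :: "'a set" and f :: "'a \<Rightarrow> 'a \<Rightarrow> 'a"
  assumes sg: "semigroup_on S f"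
begin

lemma semigroup_on_closed: "x \<in> S \<Longrightarrow> y \<in> S \<Longrightarrow> f x y \<in> S"
  using sg unfolding semigroup_on_def by blast

lemma semigroup_on_assoc: "x \<in> S \<Longrightarrow> y \<in> S \<Longrightarrow> z \<in> S \<Longrightarrow> f (f x y) z = f x (f y z)"
  using sg unfolding semigroup_on_def by blast

lemma spow_in: "x \<in> S \<Longrightarrow> spow f x k \<in> S"
  by (induction k) (auto intro: semigroup_on_closed)

lemma spow_add: "x \<in> S \<Longrightarrow> f (spow f x a) (spow f x b) = spow f x (a + b + 1)"
  by (induction a) (simp_all add: semigroup_on_assoc spow_in)

lemma spow_Suc_right: "x \<in> S \<Longrightarrow> spow f x (Suc k) = f (spow f x k) x"
  using spow_add[of x k 0] by simp

lemma spow_right_unit: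
  assumes "y \<in> S" "e \<in> S" "f y e = y"
  shows "f (spow f y k) e = spow f y k"
  using assms by (induction k) (simp_all add: semigroup_on_assoc spow_in)

lemma spow_eventually_periodic:
  assumes "finite S" "x \<in> S"
  shows "\<exists>i p. 0 < p \<and> (\<forall>t \<ge> i. \<forall>k. spow f x (t + k * p) = spow f x t)"
proof -
  have "range (spow f x) \<subseteq> S"
    using spow_in[OF assms(2)] by blast
  then have "\<not> inj (spow f x)"
    using assms(1) by (metis finite_subset finite_imageD infinite_UNIV_nat)
  then obtain i j where ij: "i < j" "spow f x i = spow f x j"
    unfolding inj_def by (metis linorder_neq_iff)
  define p where "p = j - i"
  have step: "spow f x (t + p) = spow f x t" if "i \<le> t" for t
  proof (cases "t = i")
    case True
    then show ?thesis
      using ij p_def by simp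
  next
    case False
    with that obtain m where t: "t = i + m + 1"
      by (metis add.commute le_neq_implies_less less_iff_Suc_add plus_1_eq_Suc)
    have "t + p = j + m + 1"
      using ij(1) t p_def by simp
    then have "spow f x (t + p) = f (spow f x j) (spow f x m)"
      using spow_add[OF assms(2), of j m] by simp
    also have "\<dots> = spow f x t"
      using ij(2) spow_add[OF assms(2), of i m] t by simp
    finally show ?thesis .
  qed
  have "spow f x (t + k * p) = spow f x t" if "i \<le> t" for t k
  proof (induction k)
    case (Suc k)
    have "i \<le> t + k * p"
      using that by simp
    then have "spow f x ((t + k * p) + p) = spow f x (t + k * p)"
      by (rule step)
    then show ?case
      using Suc by (simp add: ac_simps)
  qed simp
  moreover have "0 < p"
    using ij(1) p_def by simp
  ultimately show ?thesis
    by blast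
qed

lemma spow_idempotent:
  assumes "finite S" "x \<in> S"
  obtains k where "f (spow f x k) (spow f x k) = spow f x k"
proof -
  obtain i p where p: "0 < p" and per: "\<forall>t \<ge> i. \<forall>k. spow f x (t + k * p) = spow f x t"
    using spow_eventually_periodic[OF assms] by blast
  define t where "t = (i + 1) * p - 1"
  have "(i + 1) * 1 \<le> (i + 1) * p"
    using p by (intro mult_le_mono2) simp
  then have "i \<le> t" "t + 1 = (i + 1) * p"
    unfolding t_def by auto
  then have t: "i \<le> t" "t + t + 1 = t + (i + 1) * p"
    by simp_all
  have "f (spow f x t) (spow f x t) = spow f x (t + t + 1)"
    by (rule spow_add[OF assms(2)])
  also have "\<dots> = spow f x t"
    unfolding t(2) using per t(1) by blast
  finally show thesis
    by (rule that)
qed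

lemma right_ideal_has_idempotent:
  assumes "finite S" "Q \<subseteq> S" "\<And>u v. u \<in> Q \<Longrightarrow> v \<in> S \<Longrightarrow> f u v \<in> Q" "q \<in> Q"
  obtains e where "e \<in> Q" "f e e = e"
proof -
  have "q \<in> S"
    using assms(2,4) by blast
  then obtain k where k: "f (spow f q k) (spow f q k) = spow f q k"
    using spow_idempotent assms(1) by blast
  have "spow f q k \<in> Q"
    using assms(3,4) spow_in[OF \<open>q \<in> S\<close>] by (cases k) auto
  then show thesis
    using k by (rule that)
qed

lemma spow_sandwich:
  assumes a: "a \<in> S" and c: "c \<in> S" and s: "s \<in> S" and sandwich: "s = f (f a s) c"
  shows "s = f (f (spow f a k) s) (spow f c k)"
proof (induction k)
  case (Suc k)
  have A: "spow f a k \<in> S" and C: "spow f c k \<in> S"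
    using spow_in a c by auto
  have "s = f (f a s) c"
    by (rule sandwich)
  also have "\<dots> = f (f a (f (f (spow f a k) s) (spow f c k))) c"
    using Suc by simp
  also have "\<dots> = f (f (f a (spow f a k)) s) (f (spow f c k) c)"
    using A C a c s by (simp add: semigroup_on_assoc semigroup_on_closed)
  also have "\<dots> = f (f (spow f a (Suc k)) s) (spow f c (Suc k))"
    using spow_Suc_right c by simp
  finally show ?case .
qed (use sandwich in simp)

text \<open>Replace \<open>c\<close> by an idempotent power of it: then \<open>s = a\<^sup>k s c\<^sup>k\<close> is fixed by right multiplication with \<open>c\<^sup>k\<close>.\<close>

lemma right_identity_of_sandwich:
  assumes "finite S" "a \<in> S" "c \<in> S" "s \<in> S" "s = f (f a s) c"
  obtains t where "t \<in> S" "f s t = s"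
proof -
  obtain k where k: "f (spow f c k) (spow f c k) = spow f c k"
    using spow_idempotent assms(1,3) by blast
  have A: "spow f a k \<in> S" and C: "spow f c k \<in> S"
    using spow_in assms(2,3) by auto
  have s: "s = f (f (spow f a k) s) (spow f c k)"
    using spow_sandwich assms(2-5) by blast
  have "f s (spow f c k) = f (f (f (spow f a k) s) (spow f c k)) (spow f c k)"
    using s by simp
  also have "\<dots> = f (f (spow f a k) s) (f (spow f c k) (spow f c k))"
    using A C assms(4) by (simp add: semigroup_on_assoc semigroup_on_closed)
  also have "\<dots> = s"
    using k s by simp
  finally show thesis
    using that C by blast
qed

lemma two_sided_divisor_mult_left:
  assumes u: "u \<in> S" and v: "v \<in> S" and "two_sided_divisor S f (f u v) s"
  shows "two_sided_divisor S f u s"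
proof -
  from assms(3) have "(\<exists>b\<in>S. s = f u b) \<or> (\<exists>a\<in>S. \<exists>b\<in>S. s = f (f a u) b)"
    unfolding two_sided_divisor_def
  proof (elim disjE bexE)
    assume "s = f u v"
    then show ?thesis using v by blast
  next
    fix a assume "a \<in> S" "s = f a (f u v)"
    then have "s = f (f a u) v" using u v by (simp add: semigroup_on_assoc)
    then show ?thesis using \<open>a \<in> S\<close> v by blast
  next
    fix b assume "b \<in> S" "s = f (f u v) b"
    then have "s = f u (f v b)" using u v by (simp add: semigroup_on_assoc)
    then show ?thesis using semigroup_on_closed[OF v \<open>b \<in> S\<close>] by blast
  next
    fix a b assume "a \<in> S" "b \<in> S" "s = f (f a (f u v)) b"
    then have "s = f (f a u) (f v b)" using u v by (simp add: semigroup_on_assoc semigroup_on_closed)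
    then show ?thesis using \<open>a \<in> S\<close> \<open>b \<in> S\<close> v semigroup_on_closed by blast
  qed
  then show ?thesis
    unfolding two_sided_divisor_def by blast
qed

lemma two_sided_divisor_mult_right:
  assumes u: "u \<in> S" and v: "v \<in> S" and "two_sided_divisor S f (f v u) s"
  shows "two_sided_divisor S f u s"
proof -
  from assms(3) have "(\<exists>a\<in>S. s = f a u) \<or> (\<exists>a\<in>S. \<exists>b\<in>S. s = f (f a u) b)"
    unfolding two_sided_divisor_def
  proof (elim disjE bexE)
    assume "s = f v u"
    then show ?thesis using v by blast
  next
    fix a assume "a \<in> S" "s = f a (f v u)"
    then have "s = f (f a v) u" using u v by (simp add: semigroup_on_assoc)
    then show ?thesis using \<open>a \<in> S\<close> v semigroup_on_closed by blast
  next
    fix b assume "b \<in> S" "s = f (f v u) b"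
    then show ?thesis using v by blast
  next
    fix a b assume "a \<in> S" "b \<in> S" "s = f (f a (f v u)) b"
    then have "s = f (f (f a v) u) b" using u v by (simp add: semigroup_on_assoc)
    then show ?thesis using \<open>a \<in> S\<close> \<open>b \<in> S\<close> v semigroup_on_closed by blast
  qed
  then show ?thesis
    unfolding two_sided_divisor_def by blast
qed

lemma not_two_sided_divisor_self_mult:
  assumes fin: "finite S" and s: "s \<in> S" and y: "y \<in> S"
    and no_id: "\<forall>t\<in>S. f t s \<noteq> s \<and> f s t \<noteq> s"
  shows "\<not> two_sided_divisor S f (f s y) s"
proof
  have no_sandwich: "s \<noteq> f (f a s) c" if "a \<in> S" "c \<in> S" for a c
    using right_identity_of_sandwich[OF fin that s] no_id by metis
  assume "two_sided_divisor S f (f s y) s"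
  then show False
    unfolding two_sided_divisor_def
  proof (elim disjE bexE)
    assume "s = f s y"
    then show False using no_id y by auto
  next
    fix a assume "a \<in> S" "s = f a (f s y)"
    then have "s = f (f a s) y" using s y by (simp add: semigroup_on_assoc)
    then show False using no_sandwich \<open>a \<in> S\<close> y by blast
  next
    fix b assume "b \<in> S" "s = f (f s y) b"
    then have "s = f s (f y b)" using s y by (simp add: semigroup_on_assoc)
    then show False using no_id semigroup_on_closed[OF y \<open>b \<in> S\<close>] by metis
  next
    fix a b assume "a \<in> S" "b \<in> S" "s = f (f a (f s y)) b"
    then have "s = f (f a s) (f y b)" using s y by (simp add: semigroup_on_assoc semigroup_on_closed)
    then show False using no_sandwich \<open>a \<in> S\<close> semigroup_on_closed[OF y \<open>b \<in> S\<close>] by blast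
  qed
qed

lemma not_two_sided_divisor_mult_self:
  assumes fin: "finite S" and s: "s \<in> S" and y: "y \<in> S"
    and no_id: "\<forall>t\<in>S. f t s \<noteq> s \<and> f s t \<noteq> s"
  shows "\<not> two_sided_divisor S f (f y s) s"
proof
  have no_sandwich: "s \<noteq> f (f a s) c" if "a \<in> S" "c \<in> S" for a c
    using right_identity_of_sandwich[OF fin that s] no_id by metis
  assume "two_sided_divisor S f (f y s) s"
  then show False
    unfolding two_sided_divisor_def
  proof (elim disjE bexE)
    assume "s = f y s"
    then show False using no_id y by auto
  next
    fix a assume "a \<in> S" "s = f a (f y s)"
    then have "s = f (f a y) s" using s y by (simp add: semigroup_on_assoc)
    then show False using no_id semigroup_on_closed[OF \<open>a \<in> S\<close> y] by metis
  next
    fix b assume "b \<in> S" "s = f (f y s) b"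
    then show False using no_sandwich y by blast
  next
    fix a b assume "a \<in> S" "b \<in> S" "s = f (f a (f y s)) b"
    then have "s = f (f (f a y) s) b" using s y by (simp add: semigroup_on_assoc)
    then show False using no_sandwich semigroup_on_closed[OF \<open>a \<in> S\<close> y] \<open>b \<in> S\<close> by blast
  qed
qed

end

section \<open>Isomorphisms preserving the first coordinate\<close>

lemma spow_prod_mult: "spow (prod_mult f) w k = (Suc k * fst w, spow f (snd w) k)"
  by (induction k) (simp_all add: prod_mult_def)

lemma additive_spow:
  assumes "semigroup_on U g" "\<And>x y. x \<in> U \<Longrightarrow> y \<in> U \<Longrightarrow> \<phi> (g x y) = \<phi> x + \<phi> y" "w \<in> U"
  shows "\<phi> (spow g w k) = Suc k * (\<phi> w :: nat)"
  using assms by (induction k) (simp_all add: spow_in)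

lemma additive_on_idempotent_column:
  assumes "f e e = e" "\<And>n. 1 \<le> n \<Longrightarrow> (n, e) \<in> U"
    and "\<And>x y. x \<in> U \<Longrightarrow> y \<in> U \<Longrightarrow> \<phi> (prod_mult f x y) = \<phi> x + (\<phi> y :: nat)"
  shows "1 \<le> n \<Longrightarrow> \<phi> (n, e) = n * \<phi> (1, e)"
proof (induction n rule: nat_induct_at_least)
  case (Suc n)
  have "(Suc n, e) = prod_mult f (n, e) (1, e)"
    using assms(1) by (simp add: prod_mult_def)
  then show ?case
    using Suc assms(2,3) by simp
qed simp

context
  fixes S :: "'a set" and f :: "'a \<Rightarrow> 'a \<Rightarrow> 'a"
  assumes sg: "semigroup_on S f"
begin

lemma semigroup_on_prod_mult:
  assumes "U \<subseteq> UNIV \<times> S" "\<And>x y. x \<in> U \<Longrightarrow> y \<in> U \<Longrightarrow> prod_mult f x y \<in> U"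
  shows "semigroup_on U (prod_mult f)"
  unfolding semigroup_on_def
proof (intro conjI ballI)
  fix x y z assume "x \<in> U" "y \<in> U" "z \<in> U"
  then have "snd x \<in> S" "snd y \<in> S" "snd z \<in> S"
    using assms(1) by auto
  then show "prod_mult f (prod_mult f x y) z = prod_mult f x (prod_mult f y z)"
    by (simp add: prod_mult_def add.assoc semigroup_on_assoc[OF sg])
qed (rule assms(2))

text \<open>For \<open>z = (n, x)\<close> put \<open>w = (1, e) z (1, e) = (n + 2, y)\<close>, so that \<open>y e = y\<close>. If \<open>y\<^sup>k\<close> is idempotent,
  then \<open>w\<^bsup>2k\<^esup> = w\<^sup>k (k (n + 2), e)\<close>, and additivity gives \<open>\<phi> w = (n + 2) \<phi> (1, e)\<close>.\<close>

lemma additive_eq_fst_mult: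
  assumes fin: "finite S" and e: "e \<in> S" "f e e = e" and column: "\<And>n. 1 \<le> n \<Longrightarrow> (n, e) \<in> U"
    and sub: "U \<subseteq> {1..} \<times> S" and closed: "\<And>x y. x \<in> U \<Longrightarrow> y \<in> U \<Longrightarrow> prod_mult f x y \<in> U"
    and additive: "\<And>x y. x \<in> U \<Longrightarrow> y \<in> U \<Longrightarrow> \<phi> (prod_mult f x y) = \<phi> x + (\<phi> y :: nat)"
    and z: "z \<in> U"
  shows "\<phi> z = fst z * \<phi> (1, e)"
proof -
  define c where "c = \<phi> (1, e)"
  have \<phi>_column: "\<phi> (m, e) = m * c" if "1 \<le> m" for m
    using additive_on_idempotent_column[OF e(2) column additive that] c_def by simp
  have sgU: "semigroup_on U (prod_mult f)"
    using semigroup_on_prod_mult sub closed by blast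
  obtain n x where nx: "z = (n, x)"
    by (cases z)
  have x: "x \<in> S"
    using sub z nx by auto
  define y where "y = f (f e x) e"
  have y: "y \<in> S" "f y e = y"
    unfolding y_def using e x by (auto simp: semigroup_on_assoc[OF sg] semigroup_on_closed[OF sg])
  define w where "w = prod_mult f (prod_mult f (1, e) z) (1, e)"
  have e1: "(1, e) \<in> U"
    using column by simp
  have "prod_mult f (1, e) z \<in> U"
    using closed e1 z by blast
  then have w: "w \<in> U" "\<phi> w = \<phi> z + 2 * c"
    unfolding w_def c_def using closed additive e1 z by simp_all
  have w_eq: "w = (n + 2, y)"
    unfolding w_def y_def nx by (simp add: prod_mult_def)
  obtain k where k: "f (spow f y k) (spow f y k) = spow f y k"
    using spow_idempotent[OF sg fin y(1)] by blast
  have "spow (prod_mult f) w (k + k + 1) = prod_mult f (spow (prod_mult f) w k) (Suc k * (n + 2), e)"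
  proof -
    have "spow f y (k + k + 1) = spow f y k"
      using spow_add[OF sg y(1), of k k] k by simp
    then show ?thesis
      using spow_right_unit[OF sg y(1) e(1) y(2)] w_eq
      by (simp add: spow_prod_mult prod_mult_def algebra_simps)
  qed
  moreover have "spow (prod_mult f) w k \<in> U" "(Suc k * (n + 2), e) \<in> U"
    using spow_in[OF sgU w(1)] column by simp_all
  ultimately have "\<phi> (spow (prod_mult f) w (k + k + 1))
      = \<phi> (spow (prod_mult f) w k) + \<phi> (Suc k * (n + 2), e)"
    using additive by simp
  moreover have "\<phi> (spow (prod_mult f) w j) = Suc j * \<phi> w" for j
    by (rule additive_spow[OF sgU additive w(1)])
  moreover have "\<phi> (Suc k * (n + 2), e) = Suc k * (n + 2) * c"
    by (rule \<phi>_column) simp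
  ultimately have "Suc (k + k + 1) * \<phi> w = Suc k * \<phi> w + Suc k * (n + 2) * c"
    by (simp only:)
  then have "Suc k * \<phi> w = Suc k * ((n + 2) * c)"
    by (simp add: algebra_simps)
  then have "\<phi> w = (n + 2) * c"
    by (simp only: mult_cancel1) simp
  then show ?thesis
    using w(2) nx c_def by simp
qed

lemma sg_iso_preserves_fst:
  assumes fin: "finite S" and e: "e \<in> S" "f e e = e" and column: "\<And>n. 1 \<le> n \<Longrightarrow> (n, e) \<in> U"
    and sub: "U \<subseteq> {1..} \<times> S" and closed: "\<And>x y. x \<in> U \<Longrightarrow> y \<in> U \<Longrightarrow> prod_mult f x y \<in> U"
    and one: "1 \<in> fst ` V" and h: "bij_betw h U V"
    and hom: "\<forall>x\<in>U. \<forall>y\<in>U. h (prod_mult f x y) = prod_mult f (h x) (h y)"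
  shows "\<forall>z\<in>U. fst (h z) = fst z"
proof -
  have additive: "fst (h (prod_mult f x y)) = fst (h x) + fst (h y)" if "x \<in> U" "y \<in> U" for x y
    using hom that by (simp add: prod_mult_def)
  have multiple: "fst (h z) = fst z * fst (h (1, e))" if "z \<in> U" for z
    using additive_eq_fst_mult[OF fin e column sub closed additive that] .
  obtain z where "z \<in> U" "fst (h z) = 1"
    using one h unfolding bij_betw_def by force
  then have "fst (h (1, e)) = 1"
    using multiple by simp
  then show ?thesis
    using multiple by simp
qed

end

lemma fibre_card_eq_if_fst_preserving:
  assumes h: "bij_betw h U V" and fst_h: "\<forall>z\<in>U. fst (h z) = fst z"
  shows "card {z \<in> U. fst z = n} = card {z \<in> V. fst z = n}"
proof (rule bij_betw_same_card, rule bij_betw_subset[OF h])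
  show "h ` {z \<in> U. fst z = n} = {z \<in> V. fst z = n}"
  proof
    show "h ` {z \<in> U. fst z = n} \<subseteq> {z \<in> V. fst z = n}"
      using h fst_h unfolding bij_betw_def by auto
    show "{z \<in> V. fst z = n} \<subseteq> h ` {z \<in> U. fst z = n}"
    proof
      fix v assume v: "v \<in> {z \<in> V. fst z = n}"
      then obtain z where "z \<in> U" "v = h z"
        using h unfolding bij_betw_def by blast
      then show "v \<in> h ` {z \<in> U. fst z = n}"
        using v fst_h by auto
    qed
  qed
qed auto

section \<open>Continuum many isomorphism classes\<close>

lemma uncountable_nat_sets: "uncountable (UNIV :: nat set set)"
proof
  assume "countable (UNIV :: nat set set)"
  then have "from_nat_into (UNIV :: nat set set) ` UNIV = Pow UNIV"
    using range_from_nat_into by auto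
  then show False
    using Cantors_theorem by blast
qed

definition coded_product :: "'a set \<Rightarrow> 'a set \<Rightarrow> 'a \<Rightarrow> nat set \<Rightarrow> (nat \<times> 'a) set" where
  "coded_product S Q s B =
     ({1..} \<times> Q) \<union> ({n. 2 \<le> n \<and> even n} \<times> S) \<union> ((\<lambda>b. 2 * b + 1) ` B \<times> {s})"

context
  fixes S :: "'a set" and f :: "'a \<Rightarrow> 'a \<Rightarrow> 'a" and Q :: "'a set" and s :: 'a
  assumes sg: "semigroup_on S f" and QS: "Q \<subseteq> S"
    and ideal: "\<And>u v. u \<in> Q \<Longrightarrow> v \<in> S \<Longrightarrow> f u v \<in> Q \<and> f v u \<in> Q"
    and s: "s \<in> S" and s_mult: "\<And>y. y \<in> S \<Longrightarrow> f s y \<in> Q \<and> f y s \<in> Q"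
begin

lemma coded_product_subset: "coded_product S Q s B \<subseteq> {1..} \<times> S"
  using QS s unfolding coded_product_def by auto

lemma coded_product_mult_closed:
  assumes x: "x \<in> coded_product S Q s B" and y: "y \<in> coded_product S Q s B"
  shows "prod_mult f x y \<in> coded_product S Q s B"
proof -
  obtain n u m v where xy: "x = (n, u)" "y = (m, v)"
    by (metis prod.exhaust)
  have uv: "u \<in> S" "v \<in> S" "1 \<le> n" "1 \<le> m"
    using coded_product_subset x y xy by auto
  show ?thesis
  proof (cases "f u v \<in> Q")
    case True
    then show ?thesis
      using uv xy unfolding coded_product_def prod_mult_def by auto
  next
    case False
    then have "u \<notin> Q \<and> v \<notin> Q \<and> u \<noteq> s \<and> v \<noteq> s"
      using ideal s_mult uv by blast
    then have "even n \<and> 2 \<le> n \<and> even m \<and> 2 \<le> m"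
      using x y xy unfolding coded_product_def by auto
    then show ?thesis
      using uv xy semigroup_on_closed[OF sg] unfolding coded_product_def prod_mult_def by auto
  qed
qed

lemma coded_product_subdirect:
  assumes "Q \<noteq> {}"
  shows "subdirect_product S f (coded_product S Q s B)"
proof -
  let ?U = "coded_product S Q s B"
  obtain q where q: "q \<in> Q"
    using assms by blast
  have "fst ` ?U = {1..}"
  proof
    show "{1..} \<subseteq> fst ` ?U"
    proof
      fix n :: nat assume "n \<in> {1..}"
      then have "(n, q) \<in> ?U"
        using q unfolding coded_product_def by auto
      then show "n \<in> fst ` ?U"
        by (metis fst_conv image_eqI)
    qed
  qed (use coded_product_subset[of B] in auto)
  moreover have "snd ` ?U = S"
  proof
    show "S \<subseteq> snd ` ?U"
    proof
      fix y assume "y \<in> S"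
      then have "(2, y) \<in> ?U"
        unfolding coded_product_def by auto
      then show "y \<in> snd ` ?U"
        by (metis snd_conv image_eqI)
    qed
  qed (use coded_product_subset[of B] in auto)
  ultimately show ?thesis
    unfolding subdirect_product_def using coded_product_subset coded_product_mult_closed by blast
qed

lemma card_coded_product_odd_fibre:
  assumes "finite S" "s \<notin> Q"
  shows "card {z \<in> coded_product S Q s B. fst z = 2 * a + 1} = card Q + (if a \<in> B then 1 else 0)"
proof -
  have fibre_eq: "{z \<in> coded_product S Q s B. fst z = 2 * a + 1}
      = Pair (2 * a + 1) ` (if a \<in> B then insert s Q else Q)"
    unfolding coded_product_def by auto
  have "card {z \<in> coded_product S Q s B. fst z = 2 * a + 1}
      = card (if a \<in> B then insert s Q else Q)"
    unfolding fibre_eq by (intro card_image) (simp add: inj_on_def)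
  moreover have "finite Q"
    using assms(1) QS finite_subset by blast
  ultimately show ?thesis
    using assms(2) by simp
qed

lemma sg_iso_coded_product_eq:
  assumes fin: "finite S" and sQ: "s \<notin> Q" and e: "e \<in> Q" "f e e = e"
    and iso: "sg_iso f (coded_product S Q s B1) (coded_product S Q s B2)"
  shows "B1 = B2"
proof -
  let ?U1 = "coded_product S Q s B1" and ?U2 = "coded_product S Q s B2"
  obtain h where h: "bij_betw h ?U1 ?U2"
    and hom: "\<forall>x\<in>?U1. \<forall>y\<in>?U1. h (prod_mult f x y) = prod_mult f (h x) (h y)"
    using iso unfolding sg_iso_def by blast
  have "subdirect_product S f ?U2"
    using coded_product_subdirect e by blast
  then have one: "1 \<in> fst ` ?U2"
    unfolding subdirect_product_def by auto
  have column: "(n, e) \<in> ?U1" if "1 \<le> n" for n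
    using that e unfolding coded_product_def by auto
  have "e \<in> S"
    using e QS by blast
  have fst_h: "\<forall>z\<in>?U1. fst (h z) = fst z"
    using sg_iso_preserves_fst[OF sg fin \<open>e \<in> S\<close> e(2) column coded_product_subset
        coded_product_mult_closed one h hom] .
  have "a \<in> B1 \<longleftrightarrow> a \<in> B2" for a
    using fibre_card_eq_if_fst_preserving[OF h fst_h, of "2 * a + 1"]
      card_coded_product_odd_fibre[OF fin sQ] by (auto split: if_splits)
  then show ?thesis
    by blast
qed

lemma coded_products_uncountable_iso_classes:
  assumes fin: "finite S" and sQ: "s \<notin> Q" and e: "e \<in> Q" "f e e = e"
  shows "uncountable ({U. subdirect_product S f U} // {(U, V). sg_iso f U V})"
proof
  let ?X = "{U. subdirect_product S f U}" and ?R = "{(U, V). sg_iso f U V}"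
  define G where "G B = ?R `` {coded_product S Q s B}" for B
  have "inj G"
  proof
    fix B1 B2 assume "G B1 = G B2"
    moreover have "sg_iso f U U" for U
      unfolding sg_iso_def by (rule exI[of _ id]) simp
    ultimately have "sg_iso f (coded_product S Q s B1) (coded_product S Q s B2)"
      unfolding G_def by blast
    then show "B1 = B2"
      using sg_iso_coded_product_eq[OF fin sQ e] by blast
  qed
  moreover have "range G \<subseteq> ?X // ?R"
  proof
    fix Y assume "Y \<in> range G"
    then obtain B where "Y = G B"
      by blast
    have "coded_product S Q s B \<in> ?X"
      using coded_product_subdirect e by blast
    then have "G B \<in> ?X // ?R"
      unfolding G_def by (rule quotientI)
    then show "Y \<in> ?X // ?R"
      using \<open>Y = G B\<close> by simp
  qed
  moreover assume "countable (?X // ?R)"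
  ultimately have "countable (UNIV :: nat set set)"
    by (meson countable_image_inj_on countable_subset)
  then show False
    using uncountable_nat_sets by blast
qed

end

lemma uncountable_sg_iso_classes:
  assumes sg: "semigroup_on S f" and fin: "finite S" and s: "s \<in> S"
    and no_id: "\<forall>t\<in>S. f t s \<noteq> s \<and> f s t \<noteq> s"
  shows "uncountable ({U. subdirect_product S f U} // {(U, V). sg_iso f U V})"
proof -
  define Q where "Q = {u \<in> S. \<not> two_sided_divisor S f u s}"
  have QS: "Q \<subseteq> S"
    unfolding Q_def by blast
  have ideal: "f u v \<in> Q \<and> f v u \<in> Q" if "u \<in> Q" "v \<in> S" for u v
    using that two_sided_divisor_mult_left[OF sg] two_sided_divisor_mult_right[OF sg]
      semigroup_on_closed[OF sg] unfolding Q_def by blast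
  have s_mult: "f s y \<in> Q \<and> f y s \<in> Q" if "y \<in> S" for y
    using not_two_sided_divisor_self_mult[OF sg fin s that no_id]
      not_two_sided_divisor_mult_self[OF sg fin s that no_id] semigroup_on_closed[OF sg] s that
    unfolding Q_def by blast
  have sQ: "s \<notin> Q"
    unfolding Q_def two_sided_divisor_def by simp
  have right_ideal: "\<And>u v. u \<in> Q \<Longrightarrow> v \<in> S \<Longrightarrow> f u v \<in> Q"
    using ideal by blast
  obtain e where e: "e \<in> Q" "f e e = e"
    using right_ideal_has_idempotent[OF sg fin QS right_ideal conjunct1[OF s_mult[OF s]]] by blast
  show ?thesis
    using coded_products_uncountable_iso_classes[OF sg QS ideal s s_mult fin sQ e] .
qed

theorem theoremE:
  fixes S :: "'a set" and f :: "'a \<Rightarrow> 'a \<Rightarrow> 'a"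
  assumes "semigroup_on S f" and "finite S"
  shows "(countable {U. subdirect_product S f U}
          \<longleftrightarrow> countable ({U. subdirect_product S f U} // {(U, V). sg_iso f U V}))
       \<and> (countable {U. subdirect_product S f U}
          \<longleftrightarrow> (\<forall>s\<in>S. \<exists>t\<in>S. f t s = s \<or> f s t = s))"
proof -
  let ?X = "{U. subdirect_product S f U}"
  let ?units = "\<forall>s\<in>S. \<exists>t\<in>S. f t s = s \<or> f s t = s"
  have "countable ?X \<Longrightarrow> countable (?X // {(U, V). sg_iso f U V})"
    by (rule countable_quotient)
  moreover have "?units \<Longrightarrow> countable ?X"
    using countable_subdirect_products assms(2) by blast
  moreover have "countable (?X // {(U, V). sg_iso f U V}) \<Longrightarrow> ?units"
    using uncountable_sg_iso_classes[OF assms] by blast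
  ultimately show ?thesis
    by blast
qed

end
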